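(* The subspace topology induced on $D(G,K)\subseteq\mathcal R(G,K)$ by the nice topology of $\mathcal R(G,K)$ coincides with the canonical Fréchet topology of $D(G,K)$ (defined by the norms $\|\cdot\|_\rho$, $p^{-1}<\rho<1$).
   Context: $p$ is an odd prime and $K$ is a complete discretely valued field with $\mathbb Q_p\subseteq K\subseteq\mathbb C_p$, $o_K$ its ring of integers. $G$ is a uniform pro-$p$ group of dimension $d$ with an ordered minimal system of topological generators $h_1,\dots,h_d$; $b_i=h_i-1$. For $\alpha\in\mathbb Z^d$ write $\mathbf b^\alpha=b_1^{\alpha_1}\cdots b_d^{\alpha_d}$ and $\deg\alpha=\alpha_1+\dots+\alpha_d$. $D(G,K)$ is the ring of series $\sum_{\alpha\in\mathbb N_0^d}d_\alpha\mathbf b^\alpha$ with $\{|d_\alpha|\rho^{\deg\alpha}\}$ bounded for all $0<\rho<1$; for $\rho\in p^{\mathbb Q}\cap(p^{-1},1)$, $\|\cdot\|_\rho=\sup_\alpha|d_\alpha|\rho^{\deg\alpha}$ and $D_\rho(G,K)$ is the completion. For $r_0\le r$ in $p^{\mathbb Q}\cap(p^{-1},1)$, $D_{[r_0,r]}(G,K)$ is the $K$-Banach algebra obtained from $A=D_r(G,K)$ by generalized microlocalization at the multiplicative monoid $S$ generated by $b_1,\dots,b_d$ with respect to the two norms $\|\cdot\|_{r_0},\|\cdot\|_r$: with $S_i=\{a:|at-s|_i<|s|_i\text{ for some }s,t\in S\}$, $\Delta_i((s,a),(t,b))=|s|_i^{-1}|t|_i^{-1}|at-sb|_i$, $d_i(x,y)=\inf_{\xi\in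 S_i\times A}\max(\Delta_i(x,\xi),\Delta_i(y,\xi))$, $d=\max(d_1,d_2)$, it is the Hausdorff completion of $(S\times A,d)$ with its natural Banach algebra structure in which $(s,a)$ becomes $s^{-1}a$ and $S$ becomes invertible; $D(G,K)\subseteq D_r(G,K)\subseteq D_{[r_0,r]}(G,K)$. Its elements are exactly the convergent Laurent series $\sum_{\alpha\in\mathbb Z^d}d_\alpha\mathbf b^\alpha$ with $|d_\alpha|r_0^{\deg\alpha},|d_\alpha|r^{\deg\alpha}\to0$ as $\sum_i|\alpha_i|\to\infty$. $D_{[r,1)}(G,K)=\varprojlim_{r''\to1}D_{[r,r'']}(G,K)$ and $\mathcal R(G,K)=\varinjlim_{r\to1}D_{[r,1)}(G,K)$. Nice topology: for $x_0=\sum_\alpha c_{0,\alpha}\mathbf b^\alpha\in\mathcal R(G,K)$ let $L_{x_0}=\{\sum_\alpha d_\alpha\mathbf b^\alpha\in\mathcal R(G,K):|c_{0,-\alpha}||d_\alpha|\le1\ \forall\alpha\in\mathbb Z^d\}$; the nice topology is the locally convex topology on $\mathcal R(G,K)$ in which an $o_K$-lattice is open iff it contains some $L_{x_0}$. *)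

theory Defs
  imports Complex_Main "HOL-Computational_Algebra.Primes"
begin

text \<open>Coefficient field K: a field with an absolute value absK such that K is a
complete discretely valued extension of Q_p inside C_p (char 0, ultrametric,
|p| = 1/p, cyclic value group, complete, residue field algebraic over F_p).\<close>

definition disc_padic_field :: "nat \<Rightarrow> ('k::field \<Rightarrow> real) \<Rightarrow> bool" where
  "disc_padic_field p absK \<longleftrightarrow>
     prime p \<and>
     (\<forall>n::nat. n > 0 \<longrightarrow> (of_nat n :: 'k) \<noteq> 0) \<and>
     (\<forall>x. absK x \<ge> 0) \<and> (\<forall>x. absK x = 0 \<longleftrightarrow> x = 0) \<and>
     (\<forall>x y. absK (x * y) = absK x * absK y) \<and>
     (\<forall>x y. absK (x + y) \<le> max (absK x) (absK y)) \<and>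
     absK (of_nat p) = 1 / real p \<and>
     (\<exists>e::nat. e > 0 \<and> absK ` (UNIV - {0}) = {real p powr (real_of_int k / real e) | k. True}) \<and>
     (\<forall>X::nat \<Rightarrow> 'k. (\<forall>\<epsilon>>0. \<exists>N. \<forall>m\<ge>N. \<forall>n\<ge>N. absK (X m - X n) < \<epsilon>) \<longrightarrow>
        (\<exists>L. \<forall>\<epsilon>>0. \<exists>N. \<forall>n\<ge>N. absK (X n - L) < \<epsilon>)) \<and>
     (\<forall>x. absK x \<le> 1 \<longrightarrow> (\<exists>n\<ge>1. absK (x ^ (p ^ n) - x) < 1))"

text \<open>Multi-indices alpha in Z^d, d = CARD('n); coefficient families (Laurent series).\<close>

definition deg :: "('n::finite \<Rightarrow> int) \<Rightarrow> int" where
  "deg \<alpha> = (\<Sum>i\<in>UNIV. \<alpha> i)"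

definition absdeg :: "('n::finite \<Rightarrow> int) \<Rightarrow> int" where
  "absdeg \<alpha> = (\<Sum>i\<in>UNIV. \<bar>\<alpha> i\<bar>)"

definition rpows :: "nat \<Rightarrow> real set" where
  "rpows p = {r. \<exists>q\<in>\<rat>. r = real p powr q}"

text \<open>Elements of D_[r0,r](G,K) as Laurent series.\<close>
definition annulus_series :: "('k::field \<Rightarrow> real) \<Rightarrow> real \<Rightarrow> real \<Rightarrow> (('n::finite \<Rightarrow> int) \<Rightarrow> 'k) set" where
  "annulus_series absK r0 r = {c.
     (\<forall>\<epsilon>>0. \<exists>N. \<forall>\<alpha>. absdeg \<alpha> \<ge> N \<longrightarrow> absK (c \<alpha>) * r0 powr real_of_int (deg \<alpha>) < \<epsilon>) \<and>
     (\<forall>\<epsilon>>0. \<exists>N. \<forall>\<alpha>. absdeg \<alpha> \<ge> N \<longrightarrow> absK (c \<alpha>) * r powr real_of_int (deg \<alpha>) < \<epsilon>)}"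

text \<open>D_[r,1)(G,K) = inverse limit (intersection) over r'' -> 1.\<close>
definition halfopen_series :: "nat \<Rightarrow> ('k::field \<Rightarrow> real) \<Rightarrow> real \<Rightarrow> (('n::finite \<Rightarrow> int) \<Rightarrow> 'k) set" where
  "halfopen_series p absK r = {c. \<forall>r''\<in>rpows p. r \<le> r'' \<and> r'' < 1 \<longrightarrow> c \<in> annulus_series absK r r''}"

text \<open>The Robba ring R(G,K) = direct limit (union) over r -> 1.\<close>
definition robba :: "nat \<Rightarrow> ('k::field \<Rightarrow> real) \<Rightarrow> (('n::finite \<Rightarrow> int) \<Rightarrow> 'k) set" where
  "robba p absK = (\<Union>r\<in>{r\<in>rpows p. 1 / real p < r \<and> r < 1}. halfopen_series p absK r)"

definition dist_alg :: "('k::field \<Rightarrow> real) \<Rightarrow> (('n::finite \<Rightarrow> int) \<Rightarrow> 'k) set" where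
  "dist_alg absK = {c. (\<forall>\<alpha>. (\<exists>i. \<alpha> i < 0) \<longrightarrow> c \<alpha> = 0) \<and>
     (\<forall>\<rho>. 0 < \<rho> \<and> \<rho> < 1 \<longrightarrow> bdd_above (range (\<lambda>\<alpha>. absK (c \<alpha>) * \<rho> powr real_of_int (deg \<alpha>))))}"

definition rho_norm :: "('k::field \<Rightarrow> real) \<Rightarrow> real \<Rightarrow> (('n::finite \<Rightarrow> int) \<Rightarrow> 'k) \<Rightarrow> real" where
  "rho_norm absK \<rho> c = (SUP \<alpha>. absK (c \<alpha>) * \<rho> powr real_of_int (deg \<alpha>))"

definition frechet_open :: "nat \<Rightarrow> ('k::field \<Rightarrow> real) \<Rightarrow> (('n::finite \<Rightarrow> int) \<Rightarrow> 'k) set set" where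
  "frechet_open p absK = {U. U \<subseteq> dist_alg absK \<and>
     (\<forall>x\<in>U. \<exists>F. finite F \<and> F \<subseteq> {1 / real p<..<1} \<and> (\<exists>\<epsilon>>0.
        {y\<in>dist_alg absK. \<forall>\<rho>\<in>F. rho_norm absK \<rho> (\<lambda>\<alpha>. y \<alpha> - x \<alpha>) < \<epsilon>} \<subseteq> U))}"

definition L_set :: "nat \<Rightarrow> ('k::field \<Rightarrow> real) \<Rightarrow> (('n::finite \<Rightarrow> int) \<Rightarrow> 'k) \<Rightarrow> (('n \<Rightarrow> int) \<Rightarrow> 'k) set" where
  "L_set p absK x0 = {d\<in>robba p absK. \<forall>\<alpha>. absK (x0 (\<lambda>i. - \<alpha> i)) * absK (d \<alpha>) \<le> 1}"

text \<open>o_K-lattice in R(G,K): o_K-submodule that is absorbing.\<close>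
definition oK_lattice :: "nat \<Rightarrow> ('k::field \<Rightarrow> real) \<Rightarrow> (('n::finite \<Rightarrow> int) \<Rightarrow> 'k) set \<Rightarrow> bool" where
  "oK_lattice p absK M \<longleftrightarrow> M \<subseteq> robba p absK \<and> (\<lambda>\<alpha>. 0) \<in> M \<and>
     (\<forall>x\<in>M. \<forall>y\<in>M. (\<lambda>\<alpha>. x \<alpha> + y \<alpha>) \<in> M) \<and>
     (\<forall>a x. absK a \<le> 1 \<longrightarrow> x \<in> M \<longrightarrow> (\<lambda>\<alpha>. a * x \<alpha>) \<in> M) \<and>
     (\<forall>v\<in>robba p absK. \<exists>a. a \<noteq> 0 \<and> (\<lambda>\<alpha>. a * v \<alpha>) \<in> M)"

text \<open>Open sets of the nice (locally convex) topology on R(G,K): open lattices are the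
lattices containing some L_{x0}; U is open iff each point has a translate of an open lattice inside U.\<close>
definition nice_open :: "nat \<Rightarrow> ('k::field \<Rightarrow> real) \<Rightarrow> (('n::finite \<Rightarrow> int) \<Rightarrow> 'k) set set" where
  "nice_open p absK = {U. U \<subseteq> robba p absK \<and>
     (\<forall>x\<in>U. \<exists>M. oK_lattice p absK M \<and> (\<exists>x0\<in>robba p absK. L_set p absK x0 \<subseteq> M) \<and>
        (\<lambda>m. (\<lambda>\<alpha>. x \<alpha> + m \<alpha>)) ` M \<subseteq> U)}"

end

theory Submission imports Defs "HOL-Library.FuncSet" begin

text \<open>
  The two topologies are compared through the pairing
  between a Laurent series x0 and a series d given by the products
  |x0(-alpha)| |d(alpha)|, which is exactly what the lattices L_{x0} bound.

  The pairing between two series decaying at a common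
  radius is bounded, which makes every L_{x0} an o_K-lattice.

  The theorem then follows from two comparisons:
  (1) every L_{x0} contains a ball of some norm ||.||_r on D(G,K), so traces of
      nicely open sets are Frechet open;
  (2) for every ball of the norms ||.||_rho' with rho' <= rho there is an explicit
      dual series x0, with coefficients of size about p^k rho^(-|beta|) on the
      negative orthant, such that L_{x0} cuts D(G,K) inside that ball; taking the
      union of the corresponding translates of the L_{x0} shows that every Frechet
      open set is such a trace.
\<close>

section \<open>Multi-indices\<close>

lemma absdeg_nonneg: "absdeg \<beta> \<ge> 0"
  unfolding absdeg_def by (rule sum_nonneg) auto

lemma deg_neg: "deg (\<lambda>i. - \<alpha> i) = - deg \<alpha>"
  by (simp add: deg_def sum_negf)

lemma absdeg_neg: "absdeg (\<lambda>i. - \<alpha> i) = absdeg \<alpha>"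
  by (simp add: absdeg_def)

lemma deg_eq_absdeg: "\<forall>i. \<alpha> i \<ge> 0 \<Longrightarrow> deg \<alpha> = absdeg \<alpha>"
  by (simp add: deg_def absdeg_def)

lemma deg_eq_neg_absdeg: "\<forall>i. \<alpha> i \<le> 0 \<Longrightarrow> deg \<alpha> = - absdeg \<alpha>"
  by (simp add: deg_def absdeg_def sum_negf[symmetric])

lemma finite_absdeg_less: "finite {\<beta>::'n::finite \<Rightarrow> int. absdeg \<beta> < N}"
proof -
  have "{\<beta>::'n \<Rightarrow> int. absdeg \<beta> < N} \<subseteq> PiE UNIV (\<lambda>_. {-N..N})"
  proof
    fix \<beta> :: "'n \<Rightarrow> int" assume small: "\<beta> \<in> {\<beta>. absdeg \<beta> < N}"
    have "\<bar>\<beta> i\<bar> \<le> absdeg \<beta>" for i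
      unfolding absdeg_def by (rule member_le_sum) auto
    moreover have "absdeg \<beta> < N" using small by simp
    ultimately have "\<bar>\<beta> i\<bar> \<le> N" for i
      by (meson order_le_less_trans less_imp_le)
    then have "\<beta> i \<in> {-N..N}" for i
      using abs_le_D1[of "\<beta> i" N] abs_le_D2[of "\<beta> i" N] by simp
    then show "\<beta> \<in> PiE UNIV (\<lambda>_. {-N..N})" by (simp add: PiE_iff)
  qed
  then show ?thesis by (rule finite_subset) (simp add: finite_PiE)
qed

lemma bdd_above_if_eventually_less:
  fixes f :: "('n::finite \<Rightarrow> int) \<Rightarrow> real"
  assumes "\<forall>\<alpha>. absdeg \<alpha> \<ge> N \<longrightarrow> f \<alpha> < B"
  shows "bdd_above (range f)"
proof -
  have "finite (f ` {\<beta>. absdeg \<beta> < N})"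
    using finite_absdeg_less by (rule finite_imageI)
  then have "bdd_above (f ` {\<beta>. absdeg \<beta> < N} \<union> {..B})"
    by (simp add: bdd_above_finite)
  moreover have "range f \<subseteq> f ` {\<beta>. absdeg \<beta> < N} \<union> {..B}"
  proof
    fix y assume "y \<in> range f"
    then obtain \<alpha> where "y = f \<alpha>" by blast
    then show "y \<in> f ` {\<beta>. absdeg \<beta> < N} \<union> {..B}"
      using assms by (cases "absdeg \<alpha> < N") (auto simp: not_less less_imp_le)
  qed
  ultimately show ?thesis by (rule bdd_above_mono)
qed

lemma pairing_factor:
  fixes a b r :: real
  assumes "r > 0"
  shows "a * b = (a * r powr real_of_int (deg (\<lambda>i. - \<alpha> i))) * (b * r powr real_of_int (deg \<alpha>))"
  using assms by (simp add: deg_neg powr_minus field_simps)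

section \<open>Decay at a radius\<close>

definition decays :: "('k::field \<Rightarrow> real) \<Rightarrow> (('n::finite \<Rightarrow> int) \<Rightarrow> 'k) \<Rightarrow> real \<Rightarrow> bool" where
  "decays absK c s \<longleftrightarrow>
     (\<forall>\<epsilon>>0. \<exists>N. \<forall>\<alpha>. absdeg \<alpha> \<ge> N \<longrightarrow> absK (c \<alpha>) * s powr real_of_int (deg \<alpha>) < \<epsilon>)"

lemma annulus_series_iff_decays:
  "c \<in> annulus_series absK r0 r \<longleftrightarrow> decays absK c r0 \<and> decays absK c r"
  by (simp add: annulus_series_def decays_def)

locale ultrametric_abs =
  fixes absK :: "'k::field \<Rightarrow> real"
  assumes abs_nonneg: "absK x \<ge> 0"
    and abs_zero_iff: "absK x = 0 \<longleftrightarrow> x = 0"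
    and abs_mult: "absK (x * y) = absK x * absK y"
    and abs_ultra: "absK (x + y) \<le> max (absK x) (absK y)"
begin

lemma abs_zero [simp]: "absK 0 = 0"
  using abs_zero_iff by simp

lemma abs_one [simp]: "absK 1 = 1"
proof -
  have "absK 1 = absK 1 * absK 1" using abs_mult[of 1 1] by simp
  moreover have "absK 1 \<noteq> 0" using abs_zero_iff by simp
  ultimately show ?thesis by simp
qed

lemma abs_uminus [simp]: "absK (- x) = absK x"
proof -
  have "absK (-1) * absK (-1) = 1" using abs_mult[of "-1" "-1"] by simp
  then have "absK (-1) = 1"
    using abs_nonneg[of "-1"] by (simp add: square_eq_1_iff)
  then show ?thesis using abs_mult[of "-1" x] by simp
qed

lemma abs_diff: "absK (x - y) \<le> max (absK x) (absK y)"
  using abs_ultra[of x "- y"] by simp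

lemma abs_power: "absK (x ^ n) = absK x ^ n"
  by (induction n) (auto simp: abs_mult)

lemma abs_inverse: "absK (inverse x) = inverse (absK x)"
proof (cases "x = 0")
  case False
  then have "absK (inverse x) * absK x = 1" using abs_mult[of "inverse x" x] by simp
  then show ?thesis using False abs_zero_iff by (simp add: field_simps)
qed simp

lemma decays_add:
  assumes "decays absK a s" "decays absK b s"
  shows "decays absK (\<lambda>\<alpha>. a \<alpha> + b \<alpha>) s"
  unfolding decays_def
proof (intro allI impI)
  fix \<epsilon> :: real assume "\<epsilon> > 0"
  then obtain N1 N2 where
    N1: "\<forall>\<alpha>. absdeg \<alpha> \<ge> N1 \<longrightarrow> absK (a \<alpha>) * s powr real_of_int (deg \<alpha>) < \<epsilon>" and
    N2: "\<forall>\<alpha>. absdeg \<alpha> \<ge> N2 \<longrightarrow> absK (b \<alpha>) * s powr real_of_int (deg \<alpha>) < \<epsilon>"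
    using assms unfolding decays_def by meson
  have "absK (a \<alpha> + b \<alpha>) * s powr real_of_int (deg \<alpha>) < \<epsilon>" if "absdeg \<alpha> \<ge> max N1 N2" for \<alpha>
  proof -
    have small: "absK (a \<alpha>) * s powr real_of_int (deg \<alpha>) < \<epsilon>"
        "absK (b \<alpha>) * s powr real_of_int (deg \<alpha>) < \<epsilon>"
      using N1 N2 that by auto
    have "absK (a \<alpha> + b \<alpha>) * s powr real_of_int (deg \<alpha>)
        \<le> max (absK (a \<alpha>)) (absK (b \<alpha>)) * s powr real_of_int (deg \<alpha>)"
      by (rule mult_right_mono[OF abs_ultra]) simp
    also have "\<dots> < \<epsilon>"
      using small by (cases "absK (a \<alpha>) \<le> absK (b \<alpha>)") (auto simp: max_def)
    finally show ?thesis .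
  qed
  then show "\<exists>N. \<forall>\<alpha>. absdeg \<alpha> \<ge> N \<longrightarrow> absK (a \<alpha> + b \<alpha>) * s powr real_of_int (deg \<alpha>) < \<epsilon>"
    by blast
qed

lemma decays_smul:
  assumes "decays absK c s" "absK a \<le> 1"
  shows "decays absK (\<lambda>\<alpha>. a * c \<alpha>) s"
  unfolding decays_def
proof (intro allI impI)
  fix \<epsilon> :: real assume "\<epsilon> > 0"
  then obtain N where N: "\<forall>\<alpha>. absdeg \<alpha> \<ge> N \<longrightarrow> absK (c \<alpha>) * s powr real_of_int (deg \<alpha>) < \<epsilon>"
    using assms(1) unfolding decays_def by blast
  have "absK (a * c \<alpha>) * s powr real_of_int (deg \<alpha>) \<le> absK (c \<alpha>) * s powr real_of_int (deg \<alpha>)" for \<alpha>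
  proof -
    have "0 \<le> absK (c \<alpha>) * s powr real_of_int (deg \<alpha>)" by (simp add: abs_nonneg)
    from mult_left_le_one_le[OF this abs_nonneg assms(2)] show ?thesis
      by (simp add: abs_mult mult.assoc)
  qed
  then show "\<exists>N. \<forall>\<alpha>. absdeg \<alpha> \<ge> N \<longrightarrow> absK (a * c \<alpha>) * s powr real_of_int (deg \<alpha>) < \<epsilon>"
    using N by (meson le_less_trans)
qed

text \<open>Elements of D(G,K) decay at every radius s < 1: compare with the bounded
  weights at the larger radius (1 + s)/2.\<close>

lemma dist_alg_decays:
  assumes c: "c \<in> dist_alg absK" and s: "0 < s" "s < 1"
  shows "decays absK c s"
proof -
  define \<sigma> where "\<sigma> = (s + 1) / 2"
  have \<sigma>: "0 < \<sigma>" "\<sigma> < 1" "s < \<sigma>" using s by (auto simp: \<sigma>_def)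
  from c \<sigma> obtain B where B: "\<And>\<alpha>. absK (c \<alpha>) * \<sigma> powr real_of_int (deg \<alpha>) \<le> B"
    unfolding dist_alg_def bdd_above_def by fastforce
  define q where "q = s / \<sigma>"
  have q: "0 < q" "q < 1" and s_eq: "s = \<sigma> * q" using \<sigma> s by (auto simp: q_def)
  define B' where "B' = max B 1"
  have B'_pos: "B' > 0" by (simp add: B'_def)
  show ?thesis
    unfolding decays_def
  proof (intro allI impI)
    fix \<epsilon> :: real assume \<epsilon>: "\<epsilon> > 0"
    obtain N :: nat where N: "q ^ N < \<epsilon> / B'"
      using real_arch_pow_inv[of "\<epsilon> / B'" q] \<epsilon> q B'_pos by auto
    have "absK (c \<alpha>) * s powr real_of_int (deg \<alpha>) < \<epsilon>" if "absdeg \<alpha> \<ge> int N" for \<alpha>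
    proof (cases "\<exists>i. \<alpha> i < 0")
      case True
      then have "c \<alpha> = 0" using c by (auto simp: dist_alg_def)
      then show ?thesis using \<epsilon> by simp
    next
      case False
      then have "real N \<le> real_of_int (deg \<alpha>)"
        using that deg_eq_absdeg[of \<alpha>] by (simp add: not_less)
      then have q_le: "q powr real_of_int (deg \<alpha>) \<le> q ^ N"
        using q powr_mono'[of "real N" "real_of_int (deg \<alpha>)" q] by (simp add: powr_realpow)
      have "absK (c \<alpha>) * s powr real_of_int (deg \<alpha>)
          = (absK (c \<alpha>) * \<sigma> powr real_of_int (deg \<alpha>)) * q powr real_of_int (deg \<alpha>)"
        by (simp add: s_eq powr_mult)
      also have "\<dots> \<le> B' * q ^ N"
        using B[of \<alpha>] q_le B'_pos by (intro mult_mono) (auto simp: B'_def)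
      also have "\<dots> < \<epsilon>"
        using N B'_pos by (simp add: pos_less_divide_eq mult.commute)
      finally show ?thesis .
    qed
    then show "\<exists>N. \<forall>\<alpha>. absdeg \<alpha> \<ge> N \<longrightarrow> absK (c \<alpha>) * s powr real_of_int (deg \<alpha>) < \<epsilon>"
      by blast
  qed
qed

lemma dist_alg_zero: "(\<lambda>\<alpha>. 0) \<in> dist_alg absK"
  unfolding dist_alg_def by (auto simp: bdd_above_def)

lemma dist_alg_diff:
  fixes x y :: "('n::finite \<Rightarrow> int) \<Rightarrow> 'k"
  assumes "x \<in> dist_alg absK" "y \<in> dist_alg absK"
  shows "(\<lambda>\<alpha>. y \<alpha> - x \<alpha>) \<in> dist_alg absK"
  unfolding dist_alg_def
proof (intro CollectI conjI allI impI)
  fix \<alpha> :: "'n \<Rightarrow> int" assume "\<exists>i. \<alpha> i < 0"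
  then show "y \<alpha> - x \<alpha> = 0" using assms by (auto simp: dist_alg_def)
next
  fix \<rho> :: real assume "0 < \<rho> \<and> \<rho> < 1"
  then obtain B1 B2 where
    B1: "\<And>\<alpha>. absK (x \<alpha>) * \<rho> powr real_of_int (deg \<alpha>) \<le> B1" and
    B2: "\<And>\<alpha>. absK (y \<alpha>) * \<rho> powr real_of_int (deg \<alpha>) \<le> B2"
    using assms unfolding dist_alg_def bdd_above_def by fastforce
  have "absK (y \<alpha> - x \<alpha>) * \<rho> powr real_of_int (deg \<alpha>) \<le> max B1 B2" for \<alpha>
  proof -
    have "absK (y \<alpha> - x \<alpha>) * \<rho> powr real_of_int (deg \<alpha>)
        \<le> max (absK (y \<alpha>)) (absK (x \<alpha>)) * \<rho> powr real_of_int (deg \<alpha>)"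
      by (rule mult_right_mono[OF abs_diff]) simp
    also have "\<dots> \<le> max B1 B2"
      using B1[of \<alpha>] B2[of \<alpha>] by (cases "absK (y \<alpha>) \<le> absK (x \<alpha>)") (auto simp: max_def)
    finally show ?thesis .
  qed
  then show "bdd_above (range (\<lambda>\<alpha>. absK (y \<alpha> - x \<alpha>) * \<rho> powr real_of_int (deg \<alpha>)))"
    by (auto simp: bdd_above_def)
qed

lemma rho_norm_upper:
  assumes "d \<in> dist_alg absK" "0 < \<rho>" "\<rho> < 1"
  shows "absK (d \<alpha>) * \<rho> powr real_of_int (deg \<alpha>) \<le> rho_norm absK \<rho> d"
  using assms unfolding rho_norm_def dist_alg_def by (auto intro: cSUP_upper)

lemma rho_norm_least:
  assumes "\<And>\<alpha>. absK (d \<alpha>) * \<rho> powr real_of_int (deg \<alpha>) \<le> B"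
  shows "rho_norm absK \<rho> d \<le> B"
  unfolding rho_norm_def using assms by (simp add: cSUP_least)

text \<open>Two series decaying at a common radius r have bounded pairing:
  the two weighted factors are eventually below 1.\<close>

lemma pairing_bounded:
  assumes r: "r > 0" and x0: "decays absK x0 r" and v: "decays absK v r"
  shows "bdd_above (range (\<lambda>\<alpha>. absK (x0 (\<lambda>i. - \<alpha> i)) * absK (v \<alpha>)))"
proof -
  obtain N1 N2 where
    N1: "\<forall>\<beta>. absdeg \<beta> \<ge> N1 \<longrightarrow> absK (x0 \<beta>) * r powr real_of_int (deg \<beta>) < 1" and
    N2: "\<forall>\<beta>. absdeg \<beta> \<ge> N2 \<longrightarrow> absK (v \<beta>) * r powr real_of_int (deg \<beta>) < 1"
    using x0 v unfolding decays_def by (meson zero_less_one)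
  have "absK (x0 (\<lambda>i. - \<alpha> i)) * absK (v \<alpha>) < 1" if "absdeg \<alpha> \<ge> max N1 N2" for \<alpha>
  proof -
    define a where "a = absK (x0 (\<lambda>i. - \<alpha> i)) * r powr real_of_int (deg (\<lambda>i. - \<alpha> i))"
    define b where "b = absK (v \<alpha>) * r powr real_of_int (deg \<alpha>)"
    have "a < 1" using N1 that by (simp add: a_def absdeg_neg)
    moreover have "b < 1" using N2 that by (simp add: b_def)
    moreover have "0 \<le> a" by (simp add: a_def abs_nonneg)
    ultimately have "a * b < 1" by (smt (verit) mult_left_le)
    moreover have "absK (x0 (\<lambda>i. - \<alpha> i)) * absK (v \<alpha>) = a * b"
      unfolding a_def b_def by (rule pairing_factor[OF r])
    ultimately show ?thesis by simp
  qed
  then show ?thesis by (intro bdd_above_if_eventually_less) blast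
qed

end

section \<open>The Robba ring over a p-adic field\<close>

text \<open>The only features of the coefficient field used below: an ultrametric absolute
  value in which p is a nonzero element of absolute value 1/p.  In particular neither
  the parity of p nor the discreteness or completeness of K enter the argument.\<close>

locale padic_abs = ultrametric_abs absK for absK :: "'k::field \<Rightarrow> real" +
  fixes p :: nat
  assumes p_gt1: "p > 1"
    and p_nonzero: "(of_nat p :: 'k) \<noteq> 0"
    and abs_p: "absK (of_nat p) = 1 / real p"

lemma disc_padic_field_padic_abs:
  assumes "disc_padic_field p absK"
  shows "padic_abs absK p"
proof -
  have "prime p" using assms unfolding disc_padic_field_def by blast
  then have "p > 1" using prime_gt_1_nat by blast
  with assms show ?thesis
    unfolding disc_padic_field_def by unfold_locales auto
qed

context padic_abs
begin

lemma abs_p_power: "absK ((of_nat p :: 'k) ^ n) = inverse (real p ^ n)"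
  using abs_power abs_p by (simp add: power_one_over divide_inverse power_inverse)

lemma rpows_pos: "r \<in> rpows p \<Longrightarrow> r > 0"
  using p_gt1 by (auto simp: rpows_def)

lemma rpows_dense_below_one:
  assumes "0 < \<rho>" "\<rho> < 1"
  obtains \<sigma> where "\<sigma> \<in> rpows p" "\<rho> < \<sigma>" "\<sigma> < 1"
proof -
  have p: "real p > 1" using p_gt1 by simp
  then have "log (real p) \<rho> < 0" using assms by simp
  then obtain q where q: "q \<in> \<rat>" "log (real p) \<rho> < q" "q < 0"
    using Rats_dense_in_real by blast
  have "\<rho> = real p powr log (real p) \<rho>" using assms p by simp
  also have "\<dots> < real p powr q" using q p by (intro powr_less_mono) auto
  finally have "\<rho> < real p powr q" .
  moreover have "real p powr q < 1" using q p by (simp add: powr_less_one)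
  ultimately show ?thesis using that q by (auto simp: rpows_def)
qed

lemma robba_intro:
  assumes "\<sigma> \<in> rpows p" "1 / real p < \<sigma>" "\<sigma> < 1"
    and "\<And>s. s \<in> rpows p \<Longrightarrow> \<sigma> \<le> s \<Longrightarrow> s < 1 \<Longrightarrow> decays absK c s"
  shows "c \<in> robba p absK"
proof -
  have "c \<in> halfopen_series p absK \<sigma>"
    using assms unfolding halfopen_series_def annulus_series_iff_decays by auto
  then show ?thesis using assms(1-3) unfolding robba_def by auto
qed

lemma robba_decays:
  assumes "c \<in> robba p absK"
  obtains r where "r \<in> rpows p" "1 / real p < r" "r < 1"
    "\<And>s. s \<in> rpows p \<Longrightarrow> r \<le> s \<Longrightarrow> s < 1 \<Longrightarrow> decays absK c s"
  using assms unfolding robba_def halfopen_series_def annulus_series_iff_decays by blast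

lemma robba_add:
  assumes a: "a \<in> robba p absK" and b: "b \<in> robba p absK"
  shows "(\<lambda>\<alpha>. a \<alpha> + b \<alpha>) \<in> robba p absK"
proof -
  obtain r1 r2 where
    r1: "r1 \<in> rpows p" "1 / real p < r1" "r1 < 1"
      "\<And>s. s \<in> rpows p \<Longrightarrow> r1 \<le> s \<Longrightarrow> s < 1 \<Longrightarrow> decays absK a s" and
    r2: "r2 \<in> rpows p" "1 / real p < r2" "r2 < 1"
      "\<And>s. s \<in> rpows p \<Longrightarrow> r2 \<le> s \<Longrightarrow> s < 1 \<Longrightarrow> decays absK b s"
    using robba_decays[OF a] robba_decays[OF b] by metis
  show ?thesis
  proof (rule robba_intro[of "max r1 r2"])
    show "max r1 r2 \<in> rpows p" "1 / real p < max r1 r2" "max r1 r2 < 1"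
      using r1 r2 by (auto simp: max_def)
  next
    fix s assume "s \<in> rpows p" "max r1 r2 \<le> s" "s < 1"
    then show "decays absK (\<lambda>\<alpha>. a \<alpha> + b \<alpha>) s"
      using r1(4) r2(4) by (intro decays_add) auto
  qed
qed

lemma robba_smul:
  assumes c: "c \<in> robba p absK" and a: "absK a \<le> 1"
  shows "(\<lambda>\<alpha>. a * c \<alpha>) \<in> robba p absK"
proof -
  obtain r where r: "r \<in> rpows p" "1 / real p < r" "r < 1"
      "\<And>s. s \<in> rpows p \<Longrightarrow> r \<le> s \<Longrightarrow> s < 1 \<Longrightarrow> decays absK c s"
    using robba_decays[OF c] by metis
  show ?thesis by (rule robba_intro[OF r(1-3)]) (use r(4) decays_smul a in auto)
qed

lemma dist_alg_sub_robba: "dist_alg absK \<subseteq> robba p absK"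
proof
  fix c :: "('n::finite \<Rightarrow> int) \<Rightarrow> 'k" assume c: "c \<in> dist_alg absK"
  have "0 < 1 / real p" "1 / real p < 1" using p_gt1 by auto
  then obtain \<sigma> where \<sigma>: "\<sigma> \<in> rpows p" "1 / real p < \<sigma>" "\<sigma> < 1"
    by (rule rpows_dense_below_one)
  show "c \<in> robba p absK"
    by (rule robba_intro[OF \<sigma>]) (use dist_alg_decays[OF c] rpows_pos in auto)
qed

lemma robba_pairing_bounded:
  assumes x0: "x0 \<in> robba p absK" and v: "v \<in> robba p absK"
  shows "bdd_above (range (\<lambda>\<alpha>. absK (x0 (\<lambda>i. - \<alpha> i)) * absK (v \<alpha>)))"
proof -
  obtain r1 r2 where
    r1: "r1 \<in> rpows p" "r1 < 1"
      "\<And>s. s \<in> rpows p \<Longrightarrow> r1 \<le> s \<Longrightarrow> s < 1 \<Longrightarrow> decays absK x0 s" and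
    r2: "r2 \<in> rpows p" "r2 < 1"
      "\<And>s. s \<in> rpows p \<Longrightarrow> r2 \<le> s \<Longrightarrow> s < 1 \<Longrightarrow> decays absK v s"
    using robba_decays[OF x0] robba_decays[OF v] by metis
  define r where "r = max r1 r2"
  have r: "r \<in> rpows p" "r < 1" using r1 r2 by (auto simp: r_def max_def)
  show ?thesis
    by (rule pairing_bounded) (use r r1 r2 rpows_pos in \<open>auto simp: r_def\<close>)
qed

lemma L_set_add:
  assumes x: "x \<in> L_set p absK x0" and y: "y \<in> L_set p absK x0"
  shows "(\<lambda>\<alpha>. x \<alpha> + y \<alpha>) \<in> L_set p absK x0"
proof -
  have "absK (x0 (\<lambda>i. - \<alpha> i)) * absK (x \<alpha> + y \<alpha>) \<le> 1" for \<alpha>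
  proof -
    have "absK (x0 (\<lambda>i. - \<alpha> i)) * absK (x \<alpha> + y \<alpha>)
        \<le> absK (x0 (\<lambda>i. - \<alpha> i)) * max (absK (x \<alpha>)) (absK (y \<alpha>))"
      by (rule mult_left_mono[OF abs_ultra abs_nonneg])
    also have "\<dots> \<le> 1" using x y unfolding L_set_def
      by (cases "absK (x \<alpha>) \<le> absK (y \<alpha>)") (auto simp: max_def)
    finally show ?thesis .
  qed
  then show ?thesis using x y robba_add by (auto simp: L_set_def)
qed

lemma L_set_smul:
  assumes a: "absK a \<le> 1" and x: "x \<in> L_set p absK x0"
  shows "(\<lambda>\<alpha>. a * x \<alpha>) \<in> L_set p absK x0"
proof -
  have "absK (x0 (\<lambda>i. - \<alpha> i)) * absK (a * x \<alpha>) \<le> 1" for \<alpha>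
  proof -
    have "absK (x0 (\<lambda>i. - \<alpha> i)) * absK (a * x \<alpha>) = absK a * (absK (x0 (\<lambda>i. - \<alpha> i)) * absK (x \<alpha>))"
      by (simp add: abs_mult)
    also have "\<dots> \<le> 1 * 1"
      using a x abs_nonneg by (intro mult_mono) (auto simp: L_set_def)
    finally show ?thesis by simp
  qed
  then show ?thesis using x robba_smul[OF _ a] by (auto simp: L_set_def)
qed

text \<open>L_{x0} absorbs every v in R(G,K): the pairing of x0 and v is bounded, and
  multiplying v by p^k scales it by p^(-k).\<close>

lemma L_set_absorbing:
  assumes x0: "x0 \<in> robba p absK" and v: "v \<in> robba p absK"
  shows "\<exists>a. a \<noteq> 0 \<and> (\<lambda>\<alpha>. a * v \<alpha>) \<in> L_set p absK x0"
proof -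
  obtain B where B: "\<And>\<alpha>. absK (x0 (\<lambda>i. - \<alpha> i)) * absK (v \<alpha>) \<le> B"
    using robba_pairing_bounded[OF x0 v] unfolding bdd_above_def by blast
  obtain k where k: "B < real p ^ k" using real_arch_pow[of "real p" B] p_gt1 by auto
  define a :: 'k where "a = of_nat p ^ k"
  have p_pow: "real p ^ k \<ge> 1" using p_gt1 by simp
  have abs_a: "absK a = inverse (real p ^ k)" by (simp add: a_def abs_p_power)
  have "absK (x0 (\<lambda>i. - \<alpha> i)) * absK (a * v \<alpha>) \<le> 1" for \<alpha>
  proof -
    have "absK (x0 (\<lambda>i. - \<alpha> i)) * absK (a * v \<alpha>)
        = inverse (real p ^ k) * (absK (x0 (\<lambda>i. - \<alpha> i)) * absK (v \<alpha>))"
      by (simp add: abs_mult abs_a)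
    also have "\<dots> \<le> inverse (real p ^ k) * real p ^ k"
      using B[of \<alpha>] k by (intro mult_left_mono) auto
    also have "\<dots> = 1" using p_gt1 by simp
    finally show ?thesis .
  qed
  moreover have "a \<noteq> 0" using p_nonzero by (simp add: a_def)
  moreover have "absK a \<le> 1" using abs_a p_pow by (simp add: inverse_le_1_iff)
  ultimately show ?thesis using robba_smul[OF v] by (auto simp: L_set_def)
qed

lemma L_set_lattice:
  assumes x0: "x0 \<in> robba p absK"
  shows "oK_lattice p absK (L_set p absK x0)"
  unfolding oK_lattice_def
proof (intro conjI ballI allI impI)
  show "L_set p absK x0 \<subseteq> robba p absK" by (auto simp: L_set_def)
  show "(\<lambda>\<alpha>. 0) \<in> L_set p absK x0"
    using dist_alg_zero dist_alg_sub_robba by (auto simp: L_set_def)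
qed (use L_set_add L_set_smul L_set_absorbing[OF x0] in auto)

section \<open>Traces of nicely open sets are Frechet open\<close>

text \<open>If x0 decays at
  radius r, its weighted coefficients |x0(beta)| r^deg(beta) are bounded by some C > 0, and then
  ||d||_r < 1/C forces |x0(-alpha)| |d(alpha)| \<le> 1 for all alpha.\<close>

lemma L_set_contains_rho_ball:
  fixes x0 :: "('n::finite \<Rightarrow> int) \<Rightarrow> 'k"
  assumes x0: "x0 \<in> robba p absK"
  obtains r \<epsilon> where "1 / real p < r" "r < 1" "\<epsilon> > 0"
    "\<And>d. d \<in> dist_alg absK \<Longrightarrow> rho_norm absK r d < \<epsilon> \<Longrightarrow> d \<in> L_set p absK x0"
proof -
  obtain r where r: "r \<in> rpows p" "1 / real p < r" "r < 1" "decays absK x0 r"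
    using robba_decays[OF x0] by (metis order_refl)
  have r_pos: "r > 0" using r rpows_pos by auto
  obtain N where "\<forall>\<beta>. absdeg \<beta> \<ge> N \<longrightarrow> absK (x0 \<beta>) * r powr real_of_int (deg \<beta>) < 1"
    using r(4) unfolding decays_def by (meson zero_less_one)
  then have "bdd_above (range (\<lambda>\<beta>. absK (x0 \<beta>) * r powr real_of_int (deg \<beta>)))"
    by (rule bdd_above_if_eventually_less)
  then obtain C0 where C0: "\<And>\<beta>. absK (x0 \<beta>) * r powr real_of_int (deg \<beta>) \<le> C0"
    unfolding bdd_above_def by auto
  define C where "C = max C0 1"
  have C_pos: "C > 0" and C: "\<And>\<beta>. absK (x0 \<beta>) * r powr real_of_int (deg \<beta>) \<le> C"
    using C0 by (auto simp: C_def le_max_iff_disj)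
  have "d \<in> L_set p absK x0" if d: "d \<in> dist_alg absK" and small: "rho_norm absK r d < 1 / C" for d
  proof -
    have "absK (x0 (\<lambda>i. - \<alpha> i)) * absK (d \<alpha>) \<le> 1" for \<alpha>
    proof -
      have "absK (x0 (\<lambda>i. - \<alpha> i)) * absK (d \<alpha>)
          = (absK (x0 (\<lambda>i. - \<alpha> i)) * r powr real_of_int (deg (\<lambda>i. - \<alpha> i)))
            * (absK (d \<alpha>) * r powr real_of_int (deg \<alpha>))"
        by (rule pairing_factor[OF r_pos])
      also have "\<dots> \<le> C * (1 / C)"
        using C[of "\<lambda>i. - \<alpha> i"] rho_norm_upper[OF d r_pos r(3), of \<alpha>] small C_pos abs_nonneg
        by (intro mult_mono) auto
      also have "\<dots> = 1" using C_pos by simp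
      finally show ?thesis .
    qed
    then show ?thesis using d dist_alg_sub_robba by (auto simp: L_set_def)
  qed
  then show ?thesis using that[of r "1 / C"] r C_pos by auto
qed

lemma nice_open_trace_frechet_open:
  fixes U :: "(('n::finite \<Rightarrow> int) \<Rightarrow> 'k) set"
  assumes U: "U \<in> nice_open p absK"
  shows "U \<inter> dist_alg absK \<in> frechet_open p absK"
  unfolding frechet_open_def
proof (intro CollectI conjI ballI)
  show "U \<inter> dist_alg absK \<subseteq> dist_alg absK" by blast
  fix x assume x: "x \<in> U \<inter> dist_alg absK"
  then obtain M x0 where M: "x0 \<in> robba p absK" "L_set p absK x0 \<subseteq> M"
      "(\<lambda>m. (\<lambda>\<alpha>. x \<alpha> + m \<alpha>)) ` M \<subseteq> U"
    using U unfolding nice_open_def by blast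
  obtain r \<epsilon> where r: "1 / real p < r" "r < 1" "\<epsilon> > 0"
      and ball: "\<And>d. d \<in> dist_alg absK \<Longrightarrow> rho_norm absK r d < \<epsilon> \<Longrightarrow> d \<in> L_set p absK x0"
    using L_set_contains_rho_ball[OF M(1)] by blast
  have "y \<in> U" if y: "y \<in> dist_alg absK" "rho_norm absK r (\<lambda>\<alpha>. y \<alpha> - x \<alpha>) < \<epsilon>" for y
  proof -
    have "(\<lambda>\<alpha>. y \<alpha> - x \<alpha>) \<in> M"
      using ball[OF dist_alg_diff[OF _ y(1)] y(2)] x M(2) by blast
    then have "(\<lambda>\<alpha>. x \<alpha> + (y \<alpha> - x \<alpha>)) \<in> U" using M(3) by blast
    then show ?thesis by simp
  qed
  then show "\<exists>F. finite F \<and> F \<subseteq> {1 / real p<..<1} \<and> (\<exists>\<epsilon>>0.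
      {y \<in> dist_alg absK. \<forall>\<rho>\<in>F. rho_norm absK \<rho> (\<lambda>\<alpha>. y \<alpha> - x \<alpha>) < \<epsilon>} \<subseteq> U \<inter> dist_alg absK)"
    using r by (intro exI[of _ "{r}"] exI[of _ \<epsilon>]) auto
qed

end

section \<open>Dual series\<close>

text \<open>Comparison (2) rests on a dual series: supported on the negative orthant, with
  |x0(beta)| about p^k rho^(-|beta|) where rho = p^(-t).  Pairing a series of D(G,K) with it
  by at most 1 bounds all norms ||.||_rho', rho' \<le> rho, by p^(-k).\<close>

definition dual_series :: "nat \<Rightarrow> nat \<Rightarrow> real \<Rightarrow> ('n::finite \<Rightarrow> int) \<Rightarrow> 'k::field" where
  "dual_series p k t \<beta> =
     (if \<forall>i. \<beta> i \<le> 0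
      then inverse (of_nat p ^ k) * of_nat p ^ nat \<lfloor>t * real_of_int (absdeg \<beta>)\<rfloor>
      else 0)"

context padic_abs
begin

text \<open>With m = floor (t |beta|) the coefficient has size p^k p^(-m), and
  t |beta| - 1 < m \<le> t |beta|.\<close>

lemma dual_series_bounds:
  fixes t :: real
  assumes t: "t \<ge> 0" and \<beta>: "\<forall>i. \<beta> i \<le> 0"
  shows "real p ^ k * real p powr (- (t * absdeg \<beta>)) \<le> absK (dual_series p k t \<beta> :: 'k)"
    and "absK (dual_series p k t \<beta> :: 'k) \<le> real p ^ k * (real p * real p powr (- (t * absdeg \<beta>)))"
proof -
  define m where "m = nat \<lfloor>t * real_of_int (absdeg \<beta>)\<rfloor>"
  have "t * absdeg \<beta> \<ge> 0" using t absdeg_nonneg[of \<beta>] by simp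
  then have "real m = real_of_int \<lfloor>t * real_of_int (absdeg \<beta>)\<rfloor>" by (simp add: m_def)
  then have m: "real m \<le> t * absdeg \<beta>" "t * absdeg \<beta> < real m + 1" by linarith+
  have p: "real p > 1" using p_gt1 by simp
  have abs_eq: "absK (dual_series p k t \<beta> :: 'k) = real p ^ k * real p powr (- real m)"
    using \<beta> p by (simp add: dual_series_def m_def abs_mult abs_inverse abs_p_power powr_minus powr_realpow)
  have "real p powr (- (t * absdeg \<beta>)) \<le> real p powr (- real m)"
    using m p by (intro powr_mono) auto
  then show "real p ^ k * real p powr (- (t * absdeg \<beta>)) \<le> absK (dual_series p k t \<beta> :: 'k)"
    unfolding abs_eq by (intro mult_left_mono) auto
  have "real p powr (- real m) \<le> real p powr (1 + - (t * absdeg \<beta>))"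
    using m p by (intro powr_mono) auto
  also have "\<dots> = real p * real p powr (- (t * absdeg \<beta>))"
    using p by (simp only: powr_add) simp
  finally show "absK (dual_series p k t \<beta> :: 'k) \<le> real p ^ k * (real p * real p powr (- (t * absdeg \<beta>)))"
    unfolding abs_eq by (intro mult_left_mono) auto
qed

lemma dual_series_weight_bound:
  fixes t :: real
  assumes t: "t \<ge> 0" and s: "s > 0" and \<beta>: "\<forall>i. \<beta> i \<le> 0"
  shows "absK (dual_series p k t \<beta> :: 'k) * s powr real_of_int (deg \<beta>)
    \<le> real p ^ k * real p * (real p powr (- t) / s) powr real_of_int (absdeg \<beta>)"
proof -
  define n where "n = real_of_int (absdeg \<beta>)"
  have deg: "real_of_int (deg \<beta>) = - n" using deg_eq_neg_absdeg[OF \<beta>] by (simp add: n_def)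
  have "absK (dual_series p k t \<beta> :: 'k) * s powr real_of_int (deg \<beta>)
      \<le> real p ^ k * real p * real p powr (- (t * n)) * s powr (- n)"
    using mult_right_mono[OF dual_series_bounds(2)[OF t \<beta>, of k] powr_ge_zero[of s "- n"]]
    by (simp add: deg n_def mult.assoc)
  also have "real p powr (- (t * n)) = (real p powr (- t)) powr n"
    by (simp add: powr_powr)
  also have "real p ^ k * real p * (real p powr (- t)) powr n * s powr (- n)
      = real p ^ k * real p * (real p powr (- t) / s) powr n"
    using s p_gt1 by (simp add: powr_divide powr_minus powr_mult field_simps)
  finally show ?thesis by (simp add: n_def)
qed

lemma dual_series_decays:
  fixes t :: real
  assumes t: "t \<ge> 0" and s: "real p powr (- t) < s"
  shows "decays absK (dual_series p k t :: ('n::finite \<Rightarrow> int) \<Rightarrow> 'k) s"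
  unfolding decays_def
proof (intro allI impI)
  fix \<epsilon> :: real assume \<epsilon>: "\<epsilon> > 0"
  define q where "q = real p powr (- t) / s"
  define K where "K = real p ^ k * real p"
  have s_pos: "s > 0" using s powr_gt_zero[of "real p" "- t"] p_gt1 by linarith
  have q: "0 < q" "q < 1" using s s_pos p_gt1 by (auto simp: q_def)
  have K_pos: "K > 0" using p_gt1 by (simp add: K_def)
  obtain N :: nat where N: "q ^ N < \<epsilon> / K"
    using real_arch_pow_inv[of "\<epsilon> / K" q] \<epsilon> K_pos q by auto
  have "absK (dual_series p k t \<beta> :: 'k) * s powr real_of_int (deg \<beta>) < \<epsilon>"
    if \<beta>N: "absdeg \<beta> \<ge> int N" for \<beta> :: "'n \<Rightarrow> int"
  proof (cases "\<forall>i. \<beta> i \<le> 0")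
    case False
    then have "dual_series p k t \<beta> = (0 :: 'k)" unfolding dual_series_def by (rule if_not_P)
    then show ?thesis using \<epsilon> by simp
  next
    case True
    have "absK (dual_series p k t \<beta> :: 'k) * s powr real_of_int (deg \<beta>)
        \<le> K * q powr real_of_int (absdeg \<beta>)"
      using dual_series_weight_bound[OF t s_pos True] by (simp add: K_def q_def)
    also have "\<dots> \<le> K * q ^ N"
      using \<beta>N q K_pos powr_mono'[of "real N" "real_of_int (absdeg \<beta>)" q] by (simp add: powr_realpow)
    also have "\<dots> < \<epsilon>" using N K_pos by (simp add: pos_less_divide_eq mult.commute)
    finally show ?thesis .
  qed
  then show "\<exists>N. \<forall>\<beta> :: 'n \<Rightarrow> int. absdeg \<beta> \<ge> N \<longrightarrow>
      absK (dual_series p k t \<beta> :: 'k) * s powr real_of_int (deg \<beta>) < \<epsilon>"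
    by blast
qed

text \<open>For t > 0 the dual series lies in R(G,K): it decays on [sigma, 1) for a radius
  sigma = p^q above both 1/p and p^(-t).\<close>

lemma dual_series_in_robba:
  fixes t :: real
  assumes t: "t > 0"
  shows "(dual_series p k t :: ('n::finite \<Rightarrow> int) \<Rightarrow> 'k) \<in> robba p absK"
proof -
  have "real p powr (- t) < 1" using t p_gt1 by (simp add: powr_less_one)
  then have "0 < max (1 / real p) (real p powr (- t))" "max (1 / real p) (real p powr (- t)) < 1"
    using p_gt1 by (auto simp: less_max_iff_disj)
  then obtain \<sigma> where \<sigma>: "\<sigma> \<in> rpows p" "max (1 / real p) (real p powr (- t)) < \<sigma>" "\<sigma> < 1"
    by (rule rpows_dense_below_one)
  show ?thesis
  proof (rule robba_intro[of \<sigma>])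
    fix s assume "s \<in> rpows p" "\<sigma> \<le> s" "s < 1"
    then show "decays absK (dual_series p k t) s"
      using \<sigma> t by (intro dual_series_decays) auto
  qed (use \<sigma> in auto)
qed

text \<open>The key estimate: if d in D(G,K) pairs with the dual series by at most 1, then
  |d(alpha)| \<le> p^(-k) p^(t |alpha|) on the positive orthant, hence ||d||_rho \<le> p^(-k)
  for every radius rho \<le> p^(-t).\<close>

lemma dual_series_bounds_rho_norm:
  fixes t :: real
  assumes t: "t \<ge> 0" and d: "d \<in> dist_alg absK"
    and pair: "\<And>\<alpha>. absK (dual_series p k t (\<lambda>i. - \<alpha> i)) * absK (d \<alpha>) \<le> 1"
    and \<rho>: "0 < \<rho>" "\<rho> \<le> real p powr (- t)"
  shows "rho_norm absK \<rho> d \<le> inverse (real p ^ k)"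
proof (rule rho_norm_least)
  fix \<alpha>
  show "absK (d \<alpha>) * \<rho> powr real_of_int (deg \<alpha>) \<le> inverse (real p ^ k)"
  proof (cases "\<exists>i. \<alpha> i < 0")
    case True
    then have "d \<alpha> = 0" using d by (auto simp: dist_alg_def)
    then show ?thesis by simp
  next
    case False
    define n where "n = real_of_int (absdeg \<alpha>)"
    define w where "w = real p ^ k * real p powr (- (t * n))"
    have n: "0 \<le> n" using absdeg_nonneg[of \<alpha>] by (simp add: n_def)
    have deg: "real_of_int (deg \<alpha>) = n"
      using False deg_eq_absdeg[of \<alpha>] by (simp add: n_def not_less)
    have w_pos: "w > 0" using p_gt1 by (simp add: w_def)
    have "w \<le> absK (dual_series p k t (\<lambda>i. - \<alpha> i))"
      using dual_series_bounds(1)[OF t, of "\<lambda>i. - \<alpha> i" k] False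
      by (simp add: w_def n_def absdeg_neg not_less)
    then have "w * absK (d \<alpha>) \<le> absK (dual_series p k t (\<lambda>i. - \<alpha> i)) * absK (d \<alpha>)"
      by (rule mult_right_mono) (rule abs_nonneg)
    then have "w * absK (d \<alpha>) \<le> 1" using pair[of \<alpha>] by linarith
    then have coeff: "absK (d \<alpha>) \<le> inverse w" using w_pos by (simp add: field_simps)
    have "\<rho> powr n \<le> (real p powr (- t)) powr n" using \<rho> n by (intro powr_mono2) auto
    then have radius: "\<rho> powr n \<le> real p powr (- (t * n))" by (simp add: powr_powr)
    have "absK (d \<alpha>) * \<rho> powr n \<le> inverse w * real p powr (- (t * n))"
      using coeff radius w_pos abs_nonneg by (intro mult_mono) auto
    also have "\<dots> = inverse (real p ^ k)" using p_gt1 by (simp add: w_def)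
    finally show ?thesis by (simp add: deg)
  qed
qed

section \<open>Frechet open sets are traces of nicely open sets\<close>

text \<open>For the finitely many radii of the neighbourhood take
  rho to be their maximum (or 1/2), rho = p^(-t), and p^(-k) below the required bound.\<close>

lemma frechet_open_contains_L_translate:
  fixes x :: "('n::finite \<Rightarrow> int) \<Rightarrow> 'k"
  assumes V: "V \<in> frechet_open p absK" and x: "x \<in> V"
  obtains x0 where "x0 \<in> robba p absK"
    "\<And>y. y \<in> dist_alg absK \<Longrightarrow> (\<lambda>\<alpha>. y \<alpha> - x \<alpha>) \<in> L_set p absK x0 \<Longrightarrow> y \<in> V"
proof -
  obtain F \<epsilon> where F: "finite F" "F \<subseteq> {1 / real p<..<1}" and \<epsilon>: "\<epsilon> > 0"
    and ball: "{y \<in> dist_alg absK. \<forall>\<rho>\<in>F. rho_norm absK \<rho> (\<lambda>\<alpha>. y \<alpha> - x \<alpha>) < \<epsilon>} \<subseteq> V"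
    using V x unfolding frechet_open_def by blast
  have x_D: "x \<in> dist_alg absK" using V x unfolding frechet_open_def by blast
  define \<rho> where "\<rho> = Max (insert (1/2) F)"
  have "\<rho> \<in> insert (1/2) F" unfolding \<rho>_def using F(1) by (intro Max_in) auto
  then have \<rho>: "0 < \<rho>" "\<rho> < 1" using F(2) p_gt1 by (auto simp: less_trans[of 0 "1 / real p"])
  have below_\<rho>: "\<rho>' \<le> \<rho>" if "\<rho>' \<in> F" for \<rho>'
    unfolding \<rho>_def using F(1) that by (intro Max_ge) auto
  define t where "t = - log (real p) \<rho>"
  have t: "t > 0" and \<rho>_eq: "\<rho> = real p powr (- t)"
    using \<rho> p_gt1 by (simp_all add: t_def)
  obtain k :: nat where k: "(1 / real p) ^ k < \<epsilon>"
    using real_arch_pow_inv[of \<epsilon> "1 / real p"] \<epsilon> p_gt1 by auto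
  define x0 :: "('n \<Rightarrow> int) \<Rightarrow> 'k" where "x0 = dual_series p k t"
  have "y \<in> V" if y: "y \<in> dist_alg absK" and yx: "(\<lambda>\<alpha>. y \<alpha> - x \<alpha>) \<in> L_set p absK x0" for y
  proof -
    have d: "(\<lambda>\<alpha>. y \<alpha> - x \<alpha>) \<in> dist_alg absK" by (rule dist_alg_diff[OF x_D y])
    have "rho_norm absK \<rho>' (\<lambda>\<alpha>. y \<alpha> - x \<alpha>) < \<epsilon>" if \<rho>': "\<rho>' \<in> F" for \<rho>'
    proof -
      have "0 < \<rho>'" using \<rho>' F(2) p_gt1 by (auto simp: less_trans[of 0 "1 / real p"])
      then have "rho_norm absK \<rho>' (\<lambda>\<alpha>. y \<alpha> - x \<alpha>) \<le> inverse (real p ^ k)"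
        using t d yx below_\<rho>[OF \<rho>'] \<rho>_eq
        by (intro dual_series_bounds_rho_norm) (auto simp: L_set_def x0_def)
      then show ?thesis using k by (simp add: power_one_over inverse_eq_divide)
    qed
    then show "y \<in> V" using ball y by blast
  qed
  moreover have "x0 \<in> robba p absK" unfolding x0_def using t by (rule dual_series_in_robba)
  ultimately show ?thesis using that by blast
qed

text \<open>Unions of translates x + L_{x0} (x, x0 in R(G,K)) are open in the nice topology:
  around x + m one can use the lattice L_{x0} itself, since L_{x0} is closed under sums.\<close>

lemma L_translates_nice_open:
  fixes P :: "((('n::finite \<Rightarrow> int) \<Rightarrow> 'k) \<times> (('n \<Rightarrow> int) \<Rightarrow> 'k)) set"
  assumes P: "\<And>x x0. (x, x0) \<in> P \<Longrightarrow> x \<in> robba p absK \<and> x0 \<in> robba p absK"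
  shows "(\<Union>(x, x0)\<in>P. (\<lambda>m \<alpha>. x \<alpha> + m \<alpha>) ` L_set p absK x0) \<in> nice_open p absK"
    (is "?U \<in> _")
  unfolding nice_open_def
proof (intro CollectI conjI ballI)
  show "?U \<subseteq> robba p absK"
  proof
    fix z assume "z \<in> ?U"
    then obtain x x0 m where "(x, x0) \<in> P" "m \<in> L_set p absK x0" "z = (\<lambda>\<alpha>. x \<alpha> + m \<alpha>)"
      by auto
    then show "z \<in> robba p absK" using P robba_add by (auto simp: L_set_def)
  qed
next
  fix z assume "z \<in> ?U"
  then obtain x x0 m where xx0: "(x, x0) \<in> P" and m: "m \<in> L_set p absK x0"
    and z: "z = (\<lambda>\<alpha>. x \<alpha> + m \<alpha>)"
    by auto
  have lattice: "oK_lattice p absK (L_set p absK x0)"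
    using P[OF xx0] by (intro L_set_lattice) blast
  have "(\<lambda>m'. (\<lambda>\<alpha>. z \<alpha> + m' \<alpha>)) ` L_set p absK x0 \<subseteq> ?U"
  proof
    fix w assume "w \<in> (\<lambda>m'. (\<lambda>\<alpha>. z \<alpha> + m' \<alpha>)) ` L_set p absK x0"
    then obtain m' where m': "m' \<in> L_set p absK x0" and w: "w = (\<lambda>\<alpha>. z \<alpha> + m' \<alpha>)" by blast
    have "(\<lambda>\<alpha>. m \<alpha> + m' \<alpha>) \<in> L_set p absK x0" using m m' by (rule L_set_add)
    moreover have "w = (\<lambda>\<alpha>. x \<alpha> + (m \<alpha> + m' \<alpha>))" by (simp add: w z add.assoc)
    ultimately have "w \<in> (\<lambda>m \<alpha>. x \<alpha> + m \<alpha>) ` L_set p absK x0" by (intro image_eqI[where x = "\<lambda>\<alpha>. m \<alpha> + m' \<alpha>"]) simp_all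
    then show "w \<in> ?U" by (intro UN_I[OF xx0]) simp
  qed
  then show "\<exists>M. oK_lattice p absK M \<and> (\<exists>x0\<in>robba p absK. L_set p absK x0 \<subseteq> M) \<and>
      (\<lambda>m. (\<lambda>\<alpha>. z \<alpha> + m \<alpha>)) ` M \<subseteq> ?U"
    using lattice P[OF xx0] by (intro exI[of _ "L_set p absK x0"] conjI bexI[of _ x0]) auto
qed

lemma frechet_open_is_trace:
  fixes V :: "(('n::finite \<Rightarrow> int) \<Rightarrow> 'k) set"
  assumes V: "V \<in> frechet_open p absK"
  shows "\<exists>U\<in>nice_open p absK. V = U \<inter> dist_alg absK"
proof -
  define P where "P = {(x, x0). x \<in> V \<and> x0 \<in> robba p absK \<and>
      (\<forall>y\<in>dist_alg absK. (\<lambda>\<alpha>. y \<alpha> - x \<alpha>) \<in> L_set p absK x0 \<longrightarrow> y \<in> V)}"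
  define U where "U = (\<Union>(x, x0)\<in>P. (\<lambda>m \<alpha>. x \<alpha> + m \<alpha>) ` L_set p absK x0)"
  have V_D: "V \<subseteq> dist_alg absK" using V by (simp add: frechet_open_def)
  have "U \<in> nice_open p absK"
    unfolding U_def using V_D dist_alg_sub_robba by (intro L_translates_nice_open) (auto simp: P_def)
  moreover have "U \<inter> dist_alg absK \<subseteq> V"
  proof
    fix z assume z: "z \<in> U \<inter> dist_alg absK"
    then obtain x x0 m where xx0: "(x, x0) \<in> P" and m: "m \<in> L_set p absK x0"
      and z_eq: "z = (\<lambda>\<alpha>. x \<alpha> + m \<alpha>)"
      unfolding U_def by auto
    have "(\<lambda>\<alpha>. z \<alpha> - x \<alpha>) = m" by (simp add: z_eq)
    then show "z \<in> V" using xx0 z m by (auto simp: P_def)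
  qed
  moreover have "V \<subseteq> U"
  proof
    fix x assume x: "x \<in> V"
    obtain x0 :: "('n \<Rightarrow> int) \<Rightarrow> 'k" where "x0 \<in> robba p absK"
      "\<And>y. y \<in> dist_alg absK \<Longrightarrow> (\<lambda>\<alpha>. y \<alpha> - x \<alpha>) \<in> L_set p absK x0 \<Longrightarrow> y \<in> V"
      using frechet_open_contains_L_translate[OF V x] by blast
    then have xx0: "(x, x0) \<in> P" using x by (auto simp: P_def)
    then have "(\<lambda>\<alpha>. 0) \<in> L_set p absK x0"
      using L_set_lattice by (auto simp: P_def oK_lattice_def)
    then have "x \<in> (\<lambda>m \<alpha>. x \<alpha> + m \<alpha>) ` L_set p absK x0"
      by (intro image_eqI[where x = "\<lambda>\<alpha>. 0"]) simp_all
    then show "x \<in> U" unfolding U_def by (intro UN_I[OF xx0]) simp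
  qed
  ultimately show ?thesis using V_D by blast
qed

end

theorem lemma5p10:
  fixes p :: nat and absK :: "'k::field \<Rightarrow> real"
  assumes "odd p" and "disc_padic_field p absK"
  shows "{U \<inter> (dist_alg absK :: (('n::finite \<Rightarrow> int) \<Rightarrow> 'k) set) | U. U \<in> nice_open p absK}
           = frechet_open p absK"
proof -
  interpret padic_abs absK p
    using assms(2) by (rule disc_padic_field_padic_abs)
  show ?thesis
  proof (intro equalityI subsetI)
    fix W assume "W \<in> {U \<inter> (dist_alg absK :: (('n \<Rightarrow> int) \<Rightarrow> 'k) set) | U. U \<in> nice_open p absK}"
    then show "W \<in> frechet_open p absK" using nice_open_trace_frechet_open by blast
  next
    fix V :: "(('n \<Rightarrow> int) \<Rightarrow> 'k) set" assume "V \<in> frechet_open p absK"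
    then show "V \<in> {U \<inter> dist_alg absK | U. U \<in> nice_open p absK}"
      using frechet_open_is_trace by blast
  qed
qed

end
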